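(* Let $\beta=(\beta_n)_{n\ge0}$ be a non-increasing sequence of positive numbers with $\liminf_n\beta_n^{1/n}\ge1$, and let $I_1(z)=\exp\big(-\frac{1+z}{1-z}\big)$. If the composition operator $C_{I_1}$ maps $H^2(\beta)$ into itself, then $\beta$ satisfies the $\Delta_2$-condition.
   Context: $H^2(\beta)$ is the Hilbert space of analytic functions $f(z)=\sum_{n\ge0}a_nz^n$ on the unit disk $\mathbb D$ with $\|f\|^2=\sum_{n\ge0}|a_n|^2\beta_n<\infty$; $C_{I_1}f=f\circ I_1$. $\beta$ satisfies the $\Delta_2$-condition if there is $\delta\in(0,1)$ with $\beta_{2n}\ge\delta\beta_n$ for all $n\ge0$. *)

theory Defs
  imports "HOL-Analysis.Analysis"
begin

text \<open>A function is identified with its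
  values on the open unit disk (values outside the disk are irrelevant).\<close>
definition H2 :: "(nat \<Rightarrow> real) \<Rightarrow> (complex \<Rightarrow> complex) set" where
  "H2 \<beta> = {f. \<exists>a :: nat \<Rightarrow> complex.
              summable (\<lambda>n. (cmod (a n))^2 * \<beta> n) \<and>
              (\<forall>z\<in>ball 0 1. (\<lambda>n. a n * z ^ n) sums f z)}"

definition I1 :: "complex \<Rightarrow> complex" where
  "I1 z = exp (- ((1 + z) / (1 - z)))"

definition Delta2 :: "(nat \<Rightarrow> real) \<Rightarrow> bool" where
  "Delta2 \<beta> \<longleftrightarrow> (\<exists>\<delta>. 0 < \<delta> \<and> \<delta> < 1 \<and> (\<forall>n. \<beta> (2 * n) \<ge> \<delta> * \<beta> n))"

end

theory Submission
  imports Defs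
begin

(* Let G(r) = \<Sum> r^k / \<beta>_k, so that sqrt (G (|w|^2)) is the norm of the point evaluation at w
   on H^2(\<beta>).  For r in (0,1) we have I_1(-r) = u := exp(-(1-r)/(1+r)) and u^2 >= r; hence for a
   single f in H^2(\<beta>), the hypothesis f o I_1 in H^2(\<beta>) gives |f(u)| <= ||f o I_1|| sqrt (G (r^2)),
   while the normalised kernel at u takes the value sqrt (G (u^2)) >= sqrt (G r) at u.

   Comparing coefficient blocks shows that G(r) <= C G(r^2) on (0,1) forces the Delta_2-condition.
   If it fails, pick r_j with G(r_j) > 16^j G(r_j^2) and let f = \<Sum> 2^(-j-1) K_(u_j) / ||K_(u_j)||.
   Its coefficients are nonnegative, so
     2^(-j-1) sqrt (G (u_j^2)) <= f(u_j) <= ||f o I_1|| sqrt (G (r_j^2)) <= ||f o I_1|| 4^(-j) sqrt (G (u_j^2))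
   for every j, which is absurd. *)

(* The function G of the proof: G(|w|^2) = ||K_w||^2 for the reproducing kernel
   K_w(z) = \<Sum> (conj w * z)^k / \<beta>_k of H^2(\<beta>). *)
definition kernel_norm_sq :: "(nat \<Rightarrow> real) \<Rightarrow> real \<Rightarrow> real" where
  "kernel_norm_sq \<beta> r = (\<Sum>k. r ^ k / \<beta> k)"

lemma summable_power_div_weight:
  assumes pos: "\<And>n. \<beta> n > 0"
    and liminf: "Liminf sequentially (\<lambda>n. ereal (root n (\<beta> n))) \<ge> 1"
    and r: "0 \<le> r" "r < 1"
  shows "summable (\<lambda>k. r ^ k / \<beta> k)"
proof -
  define q where "q = (1 + r) / 2"
  have q: "0 < q" "q < 1" "r < q" using r by (auto simp: q_def)
  have "ereal q < Liminf sequentially (\<lambda>n. ereal (root n (\<beta> n)))"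
    using q by (intro less_le_trans[OF _ liminf]) simp
  then have "eventually (\<lambda>n. q < root n (\<beta> n)) sequentially"
    by (auto dest: less_LiminfD)
  then have "eventually (\<lambda>n. norm (r ^ n / \<beta> n) \<le> (r / q) ^ n) sequentially"
    using eventually_gt_at_top[of 0]
  proof eventually_elim
    case (elim n)
    have "q ^ n < root n (\<beta> n) ^ n"
      using elim q by (intro power_strict_mono) auto
    with elim pos[of n] have "q ^ n < \<beta> n" by simp
    then have "r ^ n / \<beta> n \<le> r ^ n / q ^ n"
      using q r pos[of n] by (intro divide_left_mono) auto
    then show ?case using r pos[of n] by (simp add: power_divide)
  qed
  moreover have "summable (\<lambda>n. (r / q) ^ n)"
    using q r by (intro summable_geometric) auto
  ultimately show ?thesis by (rule summable_comparison_test_ev)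
qed

lemma kernel_norm_sq_pos:
  assumes "\<And>n. \<beta> n > 0" "Liminf sequentially (\<lambda>n. ereal (root n (\<beta> n))) \<ge> 1"
    and "0 < r" "r < 1"
  shows "0 < kernel_norm_sq \<beta> r"
  unfolding kernel_norm_sq_def using assms
  by (intro suminf_pos summable_power_div_weight) auto

lemma kernel_norm_sq_mono:
  assumes pos: "\<And>n. \<beta> n > 0" and liminf: "Liminf sequentially (\<lambda>n. ereal (root n (\<beta> n))) \<ge> 1"
    and "0 \<le> r" "r \<le> s" "s < 1"
  shows "kernel_norm_sq \<beta> r \<le> kernel_norm_sq \<beta> s"
  unfolding kernel_norm_sq_def using assms
  by (intro suminf_le summable_power_div_weight[OF pos liminf] divide_right_mono power_mono)
     (auto intro: less_imp_le)

lemma suminf_mult_Cauchy_Schwarz: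
  fixes p q :: "nat \<Rightarrow> real"
  assumes "\<And>n. 0 \<le> p n" "\<And>n. 0 \<le> q n"
    and sp: "summable (\<lambda>n. (p n)\<^sup>2)" and sq: "summable (\<lambda>n. (q n)\<^sup>2)"
  shows "summable (\<lambda>n. p n * q n)"
    and "(\<Sum>n. p n * q n)\<^sup>2 \<le> (\<Sum>n. (p n)\<^sup>2) * (\<Sum>n. (q n)\<^sup>2)"
proof -
  have "norm (p n * q n) \<le> ((p n)\<^sup>2 + (q n)\<^sup>2) / 2" for n
    using assms(1,2)[of n] sum_squares_bound[of "p n" "q n"] by simp
  then show s: "summable (\<lambda>n. p n * q n)"
    by (intro summable_comparison_test'[OF summable_divide[OF summable_add[OF sp sq]]])
  have "(\<lambda>N. (\<Sum>n<N. p n * q n)\<^sup>2) \<longlonglongrightarrow> (\<Sum>n. p n * q n)\<^sup>2"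
    by (intro tendsto_intros summable_LIMSEQ s)
  moreover have "(\<lambda>N. (\<Sum>n<N. (p n)\<^sup>2) * (\<Sum>n<N. (q n)\<^sup>2))
      \<longlonglongrightarrow> (\<Sum>n. (p n)\<^sup>2) * (\<Sum>n. (q n)\<^sup>2)"
    by (intro tendsto_intros summable_LIMSEQ sp sq)
  ultimately show "(\<Sum>n. p n * q n)\<^sup>2 \<le> (\<Sum>n. (p n)\<^sup>2) * (\<Sum>n. (q n)\<^sup>2)"
    by (rule LIMSEQ_le) (auto intro: Cauchy_Schwarz_ineq_sum)
qed

lemma power_series_bound_kernel_norm_sq:
  fixes b :: "nat \<Rightarrow> complex"
  assumes pos: "\<And>n. \<beta> n > 0"
    and liminf: "Liminf sequentially (\<lambda>n. ereal (root n (\<beta> n))) \<ge> 1"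
    and b: "summable (\<lambda>n. (cmod (b n))\<^sup>2 * \<beta> n)"
    and z: "norm z < 1"
  shows "summable (\<lambda>n. norm (b n * z ^ n))"
    and "norm (\<Sum>n. b n * z ^ n)
           \<le> sqrt (\<Sum>n. (cmod (b n))\<^sup>2 * \<beta> n) * sqrt (kernel_norm_sq \<beta> ((norm z)\<^sup>2))"
proof -
  define p where "p n = cmod (b n) * sqrt (\<beta> n)" for n
  define q where "q n = norm z ^ n / sqrt (\<beta> n)" for n
  have pq: "p n * q n = norm (b n * z ^ n)" for n
    using pos[of n] by (simp add: p_def q_def norm_mult norm_power)
  have p2: "(p n)\<^sup>2 = (cmod (b n))\<^sup>2 * \<beta> n" for n
    using pos[of n] by (simp add: p_def power_mult_distrib)
  have q2: "(q n)\<^sup>2 = ((norm z)\<^sup>2) ^ n / \<beta> n" for n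
  proof -
    have "(q n)\<^sup>2 = (norm z ^ n)\<^sup>2 / \<beta> n"
      using pos[of n] by (simp add: q_def power_divide)
    also have "(norm z ^ n)\<^sup>2 = ((norm z)\<^sup>2) ^ n"
      by (metis power_mult mult.commute)
    finally show ?thesis .
  qed
  have sq: "summable (\<lambda>n. (q n)\<^sup>2)"
    unfolding q2 using z by (intro summable_power_div_weight[OF pos liminf]) (auto simp: power_less_one_iff)
  have sp: "summable (\<lambda>n. (p n)\<^sup>2)" unfolding p2 by (rule b)
  have nonneg: "0 \<le> p n" "0 \<le> q n" for n using pos[of n] by (auto simp: p_def q_def)
  note CS = suminf_mult_Cauchy_Schwarz[OF nonneg sp sq]
  show s: "summable (\<lambda>n. norm (b n * z ^ n))" using CS(1) unfolding pq by blast
  have "norm (\<Sum>n. b n * z ^ n) \<le> (\<Sum>n. p n * q n)"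
    unfolding pq by (rule summable_norm[OF s])
  also have "\<dots> \<le> sqrt ((\<Sum>n. (p n)\<^sup>2) * (\<Sum>n. (q n)\<^sup>2))"
    using CS(2) by (blast intro: real_le_rsqrt)
  finally show "norm (\<Sum>n. b n * z ^ n)
      \<le> sqrt (\<Sum>n. (cmod (b n))\<^sup>2 * \<beta> n) * sqrt (kernel_norm_sq \<beta> ((norm z)\<^sup>2))"
    by (simp add: p2 q2 kernel_norm_sq_def real_sqrt_mult)
qed

lemma H2_eval_bound:
  assumes pos: "\<And>n. \<beta> n > 0"
    and liminf: "Liminf sequentially (\<lambda>n. ereal (root n (\<beta> n))) \<ge> 1"
    and "g \<in> H2 \<beta>"
  obtains M where "\<And>z. norm z < 1 \<Longrightarrow> norm (g z) \<le> M * sqrt (kernel_norm_sq \<beta> ((norm z)\<^sup>2))"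
proof -
  from \<open>g \<in> H2 \<beta>\<close> obtain b where b: "summable (\<lambda>n. (cmod (b n))\<^sup>2 * \<beta> n)"
    and g: "\<And>z. norm z < 1 \<Longrightarrow> (\<lambda>n. b n * z ^ n) sums g z"
    unfolding H2_def by auto
  show thesis
  proof
    fix z :: complex assume z: "norm z < 1"
    then have "g z = (\<Sum>n. b n * z ^ n)" using g by (simp add: sums_iff)
    then show "norm (g z) \<le> sqrt (\<Sum>n. (cmod (b n))\<^sup>2 * \<beta> n) * sqrt (kernel_norm_sq \<beta> ((norm z)\<^sup>2))"
      using power_series_bound_kernel_norm_sq(2)[OF pos liminf b z] by simp
  qed
qed

lemma power_series_in_H2:
  assumes pos: "\<And>n. \<beta> n > 0"
    and liminf: "Liminf sequentially (\<lambda>n. ereal (root n (\<beta> n))) \<ge> 1"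
    and a: "summable (\<lambda>n. (cmod (a n))\<^sup>2 * \<beta> n)"
  shows "(\<lambda>z. \<Sum>n. a n * z ^ n) \<in> H2 \<beta>"
proof -
  have "(\<lambda>n. a n * z ^ n) sums (\<Sum>n. a n * z ^ n)" if "norm z < 1" for z
    by (rule summable_sums[OF summable_norm_cancel])
      (rule power_series_bound_kernel_norm_sq(1)[OF pos liminf a that])
  then show ?thesis
    unfolding H2_def using a by (intro CollectI exI[of _ a] conjI ballI) auto
qed

lemma kernel_norm_sq_square_le:
  assumes pos: "\<And>n. \<beta> n > 0" and dec: "decseq \<beta>"
    and liminf: "Liminf sequentially (\<lambda>n. ereal (root n (\<beta> n))) \<ge> 1"
    and r: "0 < r" "r < 1"
  shows "kernel_norm_sq \<beta> (r\<^sup>2) \<le> real n / \<beta> n + r ^ n * kernel_norm_sq \<beta> r"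
proof -
  define g where "g k = r ^ k / \<beta> k" for k
  define g2 where "g2 k = (r\<^sup>2) ^ k / \<beta> k" for k
  have sg: "summable g" unfolding g_def[abs_def]
    using r by (intro summable_power_div_weight[OF pos liminf]) auto
  have sg2: "summable g2" unfolding g2_def[abs_def]
    using r by (intro summable_power_div_weight[OF pos liminf]) (auto simp: power_less_one_iff)
  have g_nonneg: "0 \<le> g k" for k using r pos[of k] by (simp add: g_def)
  have "(\<Sum>k<n. g2 k) \<le> (\<Sum>k<n. 1 / \<beta> n)"
  proof (rule sum_mono)
    fix k assume "k \<in> {..<n}"
    then have "1 / \<beta> k \<le> 1 / \<beta> n"
      using pos decseqD[OF dec, of k n] by (simp add: frac_le)
    moreover have "(r\<^sup>2) ^ k \<le> 1" using r by (simp add: power_le_one)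
    ultimately show "g2 k \<le> 1 / \<beta> n"
      using mult_mono[of "(r\<^sup>2) ^ k" 1 "1 / \<beta> k" "1 / \<beta> n"] pos[of k] by (simp add: g2_def)
  qed
  then have head: "(\<Sum>k<n. g2 k) \<le> real n / \<beta> n" by simp
  have "(\<Sum>k. g2 (k + n)) \<le> (\<Sum>k. r ^ n * g (k + n))"
  proof (rule suminf_le)
    fix k
    have "(r\<^sup>2) ^ (k + n) = r ^ (2 * (k + n))" by (simp only: power_mult)
    also have "2 * (k + n) = n + (k + n) + k" by simp
    also have "r ^ (n + (k + n) + k) = r ^ n * (r ^ (k + n) * r ^ k)" by (simp add: power_add)
    also have "\<dots> \<le> r ^ n * r ^ (k + n)"
      using r by (intro mult_left_mono) (auto simp: power_le_one mult_le_cancel_left1)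
    finally show "g2 (k + n) \<le> r ^ n * g (k + n)"
      using pos[of "k + n"] by (simp add: g2_def g_def divide_right_mono)
  qed (auto intro: summable_ignore_initial_segment sg sg2 summable_mult)
  also have "\<dots> = r ^ n * (\<Sum>k. g (k + n))"
    by (rule suminf_mult[OF summable_ignore_initial_segment[OF sg]])
  also have "\<dots> \<le> r ^ n * suminf g"
    using suminf_split_initial_segment[OF sg, of n] sum_nonneg[of "{..<n}" g] g_nonneg r
    by (intro mult_left_mono) auto
  finally have tail: "(\<Sum>k. g2 (k + n)) \<le> r ^ n * suminf g" .
  show ?thesis
    using suminf_split_initial_segment[OF sg2, of n] head tail
    by (simp add: kernel_norm_sq_def g_def[abs_def] g2_def[abs_def])
qed

lemma block_le_kernel_norm_sq:
  assumes pos: "\<And>n. \<beta> n > 0" and dec: "decseq \<beta>"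
    and liminf: "Liminf sequentially (\<lambda>n. ereal (root n (\<beta> n))) \<ge> 1"
    and r: "0 < r" "r < 1"
  shows "real n * (r ^ (3 * n) / \<beta> (2 * n)) \<le> kernel_norm_sq \<beta> r"
proof -
  have "real n * (r ^ (3 * n) / \<beta> (2 * n)) = (\<Sum>k\<in>{2 * n..<3 * n}. r ^ (3 * n) / \<beta> (2 * n))"
    by simp
  also have "\<dots> \<le> (\<Sum>k\<in>{2 * n..<3 * n}. r ^ k / \<beta> k)"
  proof (rule sum_mono)
    fix k assume k: "k \<in> {2 * n..<3 * n}"
    have "r ^ (3 * n) \<le> r ^ k" using k r by (intro power_decreasing) auto
    moreover have "1 / \<beta> (2 * n) \<le> 1 / \<beta> k"
      using k pos decseqD[OF dec, of "2 * n" k] by (simp add: frac_le)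
    ultimately show "r ^ (3 * n) / \<beta> (2 * n) \<le> r ^ k / \<beta> k"
      using mult_mono[of "r ^ (3 * n)" "r ^ k" "1 / \<beta> (2 * n)" "1 / \<beta> k"] r pos[of k] pos[of "2 * n"]
      by simp
  qed
  also have "\<dots> \<le> kernel_norm_sq \<beta> r"
    unfolding kernel_norm_sq_def using r pos
    by (intro sum_le_suminf summable_power_div_weight[OF pos liminf]) (auto intro: less_imp_le)
  finally show ?thesis .
qed

lemma Delta2_if_kernel_norm_sq_doubling:
  assumes pos: "\<And>n. \<beta> n > 0" and dec: "decseq \<beta>"
    and liminf: "Liminf sequentially (\<lambda>n. ereal (root n (\<beta> n))) \<ge> 1"
    and C: "1 \<le> C"
    and doubling: "\<And>r. 0 < r \<Longrightarrow> r < 1 \<Longrightarrow> kernel_norm_sq \<beta> r \<le> C * kernel_norm_sq \<beta> (r\<^sup>2)"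
  shows "Delta2 \<beta>"
proof -
  have "\<beta> n \<le> 16 * C ^ 4 * \<beta> (2 * n)" for n
  proof (cases "n = 0")
    case True
    have "1 \<le> 16 * C ^ 4" using one_le_power[OF C, of 4] by linarith
    with True pos[of 0] show ?thesis using mult_right_mono[of 1 "16 * C ^ 4" "\<beta> 0"] by simp
  next
    case False
    \<comment> \<open>With r^n = 1/(2C) the doubling inequality absorbs the tail of G(r^2), so G(r) is at most
      of order n/\<beta>_n, while the block 2n \<le> k < 3n of G(r) has size of order n/\<beta>_(2n).\<close>
    define r where "r = root n (1 / (2 * C))"
    have r: "0 < r" "r < 1" and rn: "r ^ n = 1 / (2 * C)"
      using C False by (simp_all add: r_def)
    let ?G = "kernel_norm_sq \<beta> r"
    have "?G \<le> C * (real n / \<beta> n + r ^ n * ?G)"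
      using doubling[OF r] kernel_norm_sq_square_le[OF pos dec liminf r, of n] C
      by (meson mult_left_mono order_trans zero_le_one le_trans)
    also have "\<dots> = C * real n / \<beta> n + ?G / 2"
      using rn C by (simp add: distrib_left)
    finally have upper: "?G \<le> 2 * (C * real n / \<beta> n)" by linarith
    have "r ^ (3 * n) = 1 / (8 * C ^ 3)"
      using rn by (simp add: power_mult mult.commute[of 3 n] power_divide power_mult_distrib)
    then have "real n / (8 * C ^ 3 * \<beta> (2 * n)) \<le> ?G"
      using block_le_kernel_norm_sq[OF pos dec liminf r, of n] by simp
    with upper have "real n / (8 * C ^ 3 * \<beta> (2 * n)) \<le> 2 * (C * real n / \<beta> n)"
      by linarith
    then show ?thesis
      using False C pos[of n] pos[of "2 * n"] by (simp add: field_simps power_def)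
  qed
  moreover have "1 < 16 * C ^ 4" using one_le_power[OF C, of 4] by linarith
  then have "0 < 1 / (16 * C ^ 4)" "1 / (16 * C ^ 4) < 1" by (auto simp: divide_less_eq)
  ultimately show ?thesis
    unfolding Delta2_def using pos C by (auto simp: field_simps intro!: exI[of _ "1 / (16 * C ^ 4)"])
qed

lemma kernel_norm_sq_ratio_unbounded:
  assumes pos: "\<And>n. \<beta> n > 0" and dec: "decseq \<beta>"
    and liminf: "Liminf sequentially (\<lambda>n. ereal (root n (\<beta> n))) \<ge> 1"
    and not_Delta2: "\<not> Delta2 \<beta>" and C: "1 \<le> C"
  shows "\<exists>r. 0 < r \<and> r < 1 \<and> C * kernel_norm_sq \<beta> (r\<^sup>2) < kernel_norm_sq \<beta> r"
proof (rule ccontr)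
  assume "\<nexists>r. 0 < r \<and> r < 1 \<and> C * kernel_norm_sq \<beta> (r\<^sup>2) < kernel_norm_sq \<beta> r"
  then have "kernel_norm_sq \<beta> r \<le> C * kernel_norm_sq \<beta> (r\<^sup>2)" if "0 < r" "r < 1" for r
    using that not_less by blast
  with not_Delta2 show False
    using Delta2_if_kernel_norm_sq_doubling[OF pos dec liminf C] by blast
qed

lemma le_exp_minus_div_power2:
  fixes r :: real
  assumes r: "0 < r" "r \<le> 1"
  shows "r \<le> (exp (- ((1 - r) / (1 + r))))\<^sup>2"
proof -
  define h where "h x = ln x + 2 * (1 - x) / (1 + x)" for x :: real
  have "h r \<le> h 1"
  proof (rule DERIV_nonneg_imp_nondecreasing[OF r(2)])
    fix x assume x: "r \<le> x" "x \<le> 1"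
    then have "0 < x" using r by linarith
    have "(h has_real_derivative (1 / x - 4 / (1 + x)\<^sup>2)) (at x)"
      unfolding h_def[abs_def] using \<open>0 < x\<close>
      by (auto intro!: derivative_eq_intros simp: field_simps power2_eq_square)
    moreover have "4 * x \<le> (1 + x)\<^sup>2"
      using zero_le_power2[of "1 - x"] by (simp add: power2_eq_square algebra_simps)
    then have "4 / (1 + x)\<^sup>2 \<le> 1 / x" using \<open>0 < x\<close> by (simp add: divide_simps)
    ultimately show "\<exists>y. (h has_real_derivative y) (at x) \<and> 0 \<le> y" by auto
  qed
  then have "ln r \<le> 2 * (- ((1 - r) / (1 + r)))" by (simp add: h_def)
  then have "exp (ln r) \<le> exp (2 * (- ((1 - r) / (1 + r))))" by simp
  then show ?thesis using r by (simp only: exp_ln exp_double)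
qed

lemma I1_minus_of_real: "I1 (- of_real r) = of_real (exp (- ((1 - r) / (1 + r))))"
proof -
  have "(1 + - complex_of_real r) / (1 - - complex_of_real r) = of_real ((1 - r) / (1 + r))"
    by simp
  then show ?thesis by (simp add: I1_def flip: exp_of_real)
qed

lemma kernel_norm_sq_le_at_I1:
  assumes pos: "\<And>n. \<beta> n > 0"
    and liminf: "Liminf sequentially (\<lambda>n. ereal (root n (\<beta> n))) \<ge> 1"
    and r: "0 < r" "r < 1"
  shows "kernel_norm_sq \<beta> r \<le> kernel_norm_sq \<beta> ((exp (- ((1 - r) / (1 + r))))\<^sup>2)"
proof (rule kernel_norm_sq_mono[OF pos liminf])
  show "r \<le> (exp (- ((1 - r) / (1 + r))))\<^sup>2" using r by (intro le_exp_minus_div_power2) auto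
  have "0 < (1 - r) / (1 + r)" using r by simp
  then show "(exp (- ((1 - r) / (1 + r))))\<^sup>2 < 1" by (simp add: power_less_one_iff)
qed (use r in simp)

lemma H2_composition_I1_bound:
  assumes pos: "\<And>n. \<beta> n > 0"
    and liminf: "Liminf sequentially (\<lambda>n. ereal (root n (\<beta> n))) \<ge> 1"
    and "f \<circ> I1 \<in> H2 \<beta>"
  obtains M where "\<And>r. 0 < r \<Longrightarrow> r < 1 \<Longrightarrow>
    norm (f (of_real (exp (- ((1 - r) / (1 + r)))))) \<le> M * sqrt (kernel_norm_sq \<beta> (r\<^sup>2))"
proof -
  from \<open>f \<circ> I1 \<in> H2 \<beta>\<close> obtain M where
    bound: "\<And>z. norm z < 1 \<Longrightarrow> norm ((f \<circ> I1) z) \<le> M * sqrt (kernel_norm_sq \<beta> ((norm z)\<^sup>2))"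
    by (rule H2_eval_bound[OF pos liminf]) blast
  have "norm (f (of_real (exp (- ((1 - r) / (1 + r)))))) \<le> M * sqrt (kernel_norm_sq \<beta> (r\<^sup>2))"
    if "0 < r" "r < 1" for r
    using bound[of "- of_real r"] that by (simp add: I1_minus_of_real)
  then show thesis by (rule that)
qed

(* x is the coefficient sequence of K_u / ||K_u||, and K_u(u) = ||K_u||^2. *)
lemma normalized_kernel_sums:
  assumes pos: "\<And>n. \<beta> n > 0"
    and liminf: "Liminf sequentially (\<lambda>n. ereal (root n (\<beta> n))) \<ge> 1"
    and u: "0 < u" "u < 1"
  defines "x n \<equiv> u ^ n / \<beta> n / sqrt (kernel_norm_sq \<beta> (u\<^sup>2))"
  shows "(\<lambda>n. (x n)\<^sup>2 * \<beta> n) sums 1"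
    and "(\<lambda>n. x n * u ^ n) sums sqrt (kernel_norm_sq \<beta> (u\<^sup>2))"
proof -
  define s where "s = kernel_norm_sq \<beta> (u\<^sup>2)"
  have u2: "0 < u\<^sup>2" "u\<^sup>2 < 1" using u by (auto simp: power_less_one_iff)
  have s: "0 < s" unfolding s_def by (rule kernel_norm_sq_pos[OF pos liminf u2])
  have G: "(\<lambda>n. (u\<^sup>2) ^ n / \<beta> n) sums s"
    unfolding s_def kernel_norm_sq_def using u2
    by (intro summable_sums summable_power_div_weight[OF pos liminf]) auto
  have uu: "(u ^ n)\<^sup>2 = (u\<^sup>2) ^ n" for n by (metis power_mult mult.commute)
  have x: "x n = u ^ n / \<beta> n / sqrt s" for n by (simp add: x_def s_def)
  have "(x n)\<^sup>2 * \<beta> n = (u ^ n)\<^sup>2 / \<beta> n / s" for n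
    using pos[of n] s by (simp add: x power_divide) (simp add: power2_eq_square)
  then have "(x n)\<^sup>2 * \<beta> n = (u\<^sup>2) ^ n / \<beta> n / s" for n by (simp only: uu)
  then show "(\<lambda>n. (x n)\<^sup>2 * \<beta> n) sums 1"
    using sums_divide[OF G, of s] s by simp
  have "x n * u ^ n = (u ^ n)\<^sup>2 / \<beta> n / sqrt s" for n
    by (simp add: x power2_eq_square)
  then have "x n * u ^ n = (u\<^sup>2) ^ n / \<beta> n / sqrt s" for n by (simp only: uu)
  then show "(\<lambda>n. x n * u ^ n) sums sqrt (kernel_norm_sq \<beta> (u\<^sup>2))"
    using sums_divide[OF G, of "sqrt s"] s by (simp add: s_def real_div_sqrt)
qed

lemma summable_suminf_combination_weighted_sq:
  fixes \<beta> c :: "nat \<Rightarrow> real" and x :: "nat \<Rightarrow> nat \<Rightarrow> real"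
  assumes pos: "\<And>n. \<beta> n > 0"
    and c: "\<And>j. 0 \<le> c j" "summable c"
    and x: "\<And>j n. 0 \<le> x j n" "\<And>j. (\<lambda>n. (x j n)\<^sup>2 * \<beta> n) sums 1"
  shows "summable (\<lambda>j. c j * x j n)"
    and "summable (\<lambda>n. (\<Sum>j. c j * x j n)\<^sup>2 * \<beta> n)"
proof -
  have x_sq_le: "(x j n)\<^sup>2 * \<beta> n \<le> 1" for j n
    using sum_le_suminf[OF sums_summable[OF x(2)], of "{n}" j] sums_unique[OF x(2)[of j]] pos
    by (simp add: less_imp_le)
  then have "(x j n)\<^sup>2 \<le> 1 / \<beta> n" for j n using pos[of n] by (simp add: le_divide_eq)
  then have "c j * (x j n)\<^sup>2 \<le> c j * (1 / \<beta> n)" for j n by (rule mult_left_mono) (rule c(1))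
  then have cx2: "summable (\<lambda>j. c j * (x j n)\<^sup>2)" for n
    using c(1) by (intro summable_comparison_test'[OF summable_mult2[OF c(2), of "1 / \<beta> n"], of 0]) simp
  define P where "P j = sqrt (c j)" for j
  define Q where "Q j n = sqrt (c j) * x j n" for j n
  have PQ: "P j * Q j n = c j * x j n" "(P j)\<^sup>2 = c j" "(Q j n)\<^sup>2 = c j * (x j n)\<^sup>2" for j n
    using c(1)[of j] by (simp_all add: P_def Q_def power_mult_distrib)
  have "0 \<le> P j" "0 \<le> Q j n" for j n using c(1)[of j] x(1)[of j n] by (simp_all add: P_def Q_def)
  note CS = suminf_mult_Cauchy_Schwarz[of P "\<lambda>j. Q j n" for n, OF this, unfolded PQ, OF c(2) cx2]
  show "summable (\<lambda>j. c j * x j n)" by (rule CS(1))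
  have "(\<Sum>n<N. (\<Sum>j. c j * x j n)\<^sup>2 * \<beta> n) \<le> suminf c * suminf c" for N
  proof -
    have "(\<Sum>n<N. (\<Sum>j. c j * x j n)\<^sup>2 * \<beta> n) \<le> (\<Sum>n<N. suminf c * (\<Sum>j. c j * (x j n)\<^sup>2) * \<beta> n)"
      using CS(2) pos by (intro sum_mono mult_right_mono) (auto intro: less_imp_le)
    also have "\<dots> = suminf c * (\<Sum>n<N. \<Sum>j. c j * (x j n)\<^sup>2 * \<beta> n)"
      by (simp add: sum_distrib_left mult.assoc suminf_mult2[OF cx2])
    also have "\<dots> = suminf c * (\<Sum>j. \<Sum>n<N. c j * (x j n)\<^sup>2 * \<beta> n)"
      using cx2 by (subst suminf_sum) (auto intro: summable_mult2)
    also have "\<dots> = suminf c * (\<Sum>j. c j * (\<Sum>n<N. (x j n)\<^sup>2 * \<beta> n))"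
      by (simp add: sum_distrib_left mult.assoc)
    also have "\<dots> \<le> suminf c * suminf c"
    proof (intro mult_left_mono suminf_le)
      show "c j * (\<Sum>n<N. (x j n)\<^sup>2 * \<beta> n) \<le> c j" for j
        using sum_le_suminf[OF sums_summable[OF x(2)], of "{..<N}" j] sums_unique[OF x(2)[of j]]
          pos c(1)[of j]
        by (simp add: less_imp_le mult_left_le)
      have "summable (\<lambda>j. \<Sum>n<N. c j * (x j n)\<^sup>2 * \<beta> n)"
        using cx2 by (intro summable_sum summable_mult2)
      then show "summable (\<lambda>j. c j * (\<Sum>n<N. (x j n)\<^sup>2 * \<beta> n))"
        by (simp add: sum_distrib_left mult.assoc)
    qed (use c in \<open>auto intro: suminf_nonneg\<close>)
    finally show ?thesis .
  qed
  then show "summable (\<lambda>n. (\<Sum>j. c j * x j n)\<^sup>2 * \<beta> n)"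
    using pos by (intro summableI_nonneg_bounded) (simp_all add: less_imp_le)
qed

lemma H2_function_large_at_points:
  fixes \<beta> u :: "nat \<Rightarrow> real"
  assumes pos: "\<And>n. \<beta> n > 0"
    and liminf: "Liminf sequentially (\<lambda>n. ereal (root n (\<beta> n))) \<ge> 1"
    and u: "\<And>j. 0 < u j" "\<And>j. u j < 1"
  obtains f where "f \<in> H2 \<beta>"
    and "\<And>j. (1 / 2) ^ Suc j * sqrt (kernel_norm_sq \<beta> ((u j)\<^sup>2)) \<le> norm (f (of_real (u j)))"
proof -
  define x where "x j n = u j ^ n / \<beta> n / sqrt (kernel_norm_sq \<beta> ((u j)\<^sup>2))" for j n
  define c where "c j = (1 / 2 :: real) ^ Suc j" for j
  define a where "a n = (\<Sum>j. c j * x j n)" for n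
  have kernel: "(\<lambda>n. (x j n)\<^sup>2 * \<beta> n) sums 1"
    "(\<lambda>n. x j n * u j ^ n) sums sqrt (kernel_norm_sq \<beta> ((u j)\<^sup>2))" for j
    unfolding x_def by (rule normalized_kernel_sums[OF pos liminf u(1,2)])+
  have "0 < kernel_norm_sq \<beta> ((u j)\<^sup>2)" for j
    using u(1,2)[of j] by (intro kernel_norm_sq_pos[OF pos liminf]) (auto simp: power_less_one_iff)
  then have x_nonneg: "0 \<le> x j n" for j n
    using pos[of n] u(1)[of j] by (simp add: x_def less_imp_le)
  have c: "0 \<le> c j" "summable c" for j
    using sums_summable[OF power_half_series] by (simp_all add: c_def[abs_def])
  note combination = summable_suminf_combination_weighted_sq[OF pos c x_nonneg kernel(1)]
  have a_ge: "c j * x j n \<le> a n" for j n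
    using sum_le_suminf[OF combination(1), of "{j}"] c(1) x_nonneg by (simp add: a_def)
  have a_nonneg: "0 \<le> a n" for n
    using a_ge[of 0 n] mult_nonneg_nonneg[OF c(1) x_nonneg, of 0 0 n] by linarith
  have a: "summable (\<lambda>n. (cmod (of_real (a n)))\<^sup>2 * \<beta> n)"
    using combination(2) by (simp add: a_def)
  define f :: "complex \<Rightarrow> complex" where "f z = (\<Sum>n. of_real (a n) * z ^ n)" for z
  have "c j * sqrt (kernel_norm_sq \<beta> ((u j)\<^sup>2)) \<le> norm (f (of_real (u j)))" for j
  proof -
    have "summable (\<lambda>n. norm (of_real (a n) * of_real (u j) ^ n :: complex))"
      using u(1,2)[of j] by (intro power_series_bound_kernel_norm_sq(1)[OF pos liminf a]) simp
    then have sa: "summable (\<lambda>n. a n * u j ^ n)"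
      using a_nonneg u(1)[of j] by (simp add: norm_mult norm_power)
    have "c j * sqrt (kernel_norm_sq \<beta> ((u j)\<^sup>2)) = (\<Sum>n. c j * x j n * u j ^ n)"
      using sums_mult[OF kernel(2), of "c j" j] by (simp add: sums_iff mult.assoc)
    also have "\<dots> \<le> (\<Sum>n. a n * u j ^ n)"
      using sums_summable[OF sums_mult[OF kernel(2), of "c j" j]] sa a_ge u(1)[of j]
      by (intro suminf_le) (auto simp: mult.assoc intro: mult_right_mono)
    also have "\<dots> = norm (f (of_real (u j)))"
    proof -
      have "f (of_real (u j)) = of_real (\<Sum>n. a n * u j ^ n)"
        unfolding f_def suminf_of_real[OF sa] by simp
      then show ?thesis using sa a_nonneg u(1)[of j] by (simp add: suminf_nonneg)
    qed
    finally show ?thesis .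
  qed
  moreover have "f \<in> H2 \<beta>"
    using power_series_in_H2[OF pos liminf a] by (simp add: f_def[abs_def])
  ultimately show thesis using that by (simp add: c_def)
qed

lemma two_power_le_of_sqrt_bounds:
  fixes s t M :: real
  assumes t: "0 < t" and gap: "16 ^ j * t \<le> s" and bound: "(1 / 2) ^ Suc j * sqrt s \<le> M * sqrt t"
  shows "2 ^ j \<le> 2 * M"
proof -
  have "4 ^ j * sqrt t \<le> sqrt s"
    using real_sqrt_le_mono[OF gap] by (simp add: real_sqrt_mult real_sqrt_power)
  then have "(1 / 2) ^ Suc j * (4 ^ j * sqrt t) \<le> M * sqrt t"
    using bound by (meson mult_left_mono order_trans zero_le_divide_1_iff zero_le_numeral zero_le_power)
  then have "(1 / 2) ^ Suc j * 4 ^ j \<le> M" using t by (simp add: mult.assoc)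
  moreover have "(4 :: real) ^ j = 2 ^ j * 2 ^ j" by (simp flip: power_mult_distrib)
  ultimately show ?thesis by (simp add: field_simps)
qed

theorem mainTheorem20:
  assumes pos: "\<And>n. \<beta> n > 0"
    and noninc: "\<And>n. \<beta> (Suc n) \<le> \<beta> n"
    and liminf: "Liminf sequentially (\<lambda>n. ereal (root n (\<beta> n))) \<ge> 1"
    and maps: "\<forall>f\<in>H2 \<beta>. f \<circ> I1 \<in> H2 \<beta>"
  shows "Delta2 \<beta>"
proof (rule ccontr)
  assume not_Delta2: "\<not> Delta2 \<beta>"
  let ?G = "kernel_norm_sq \<beta>"
  have "\<forall>j. \<exists>r. 0 < r \<and> r < 1 \<and> 16 ^ j * ?G (r\<^sup>2) < ?G r"
    using kernel_norm_sq_ratio_unbounded[OF pos decseq_SucI liminf not_Delta2] noninc by simp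
  then obtain \<rho> where \<rho>: "\<And>j. 0 < \<rho> j" "\<And>j. \<rho> j < 1"
    "\<And>j. 16 ^ j * ?G ((\<rho> j)\<^sup>2) < ?G (\<rho> j)"
    by metis
  define u where "u j = exp (- ((1 - \<rho> j) / (1 + \<rho> j)))" for j
  have u: "\<And>j. 0 < u j" "\<And>j. u j < 1"
    using \<rho>(1,2) by (simp_all add: u_def add_pos_pos)
  obtain f where "f \<in> H2 \<beta>"
    and large: "\<And>j. (1 / 2) ^ Suc j * sqrt (?G ((u j)\<^sup>2)) \<le> norm (f (of_real (u j)))"
    using H2_function_large_at_points[where u = u, OF pos liminf u] by blast
  with maps have "f \<circ> I1 \<in> H2 \<beta>" by blast
  then obtain M where bound: "\<And>j. norm (f (of_real (u j))) \<le> M * sqrt (?G ((\<rho> j)\<^sup>2))"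
    unfolding u_def using H2_composition_I1_bound[OF pos liminf] \<rho>(1,2) by metis
  have "2 ^ j \<le> 2 * M" for j
  proof (rule two_power_le_of_sqrt_bounds)
    show "0 < ?G ((\<rho> j)\<^sup>2)"
      using \<rho>(1,2)[of j] by (intro kernel_norm_sq_pos[OF pos liminf]) (auto simp: power_less_one_iff)
    show "16 ^ j * ?G ((\<rho> j)\<^sup>2) \<le> ?G ((u j)\<^sup>2)"
      using \<rho>(3)[of j] kernel_norm_sq_le_at_I1[OF pos liminf \<rho>(1,2)[of j]] unfolding u_def by linarith
    show "(1 / 2) ^ Suc j * sqrt (?G ((u j)\<^sup>2)) \<le> M * sqrt (?G ((\<rho> j)\<^sup>2))"
      using large[of j] bound[of j] by linarith
  qed
  then show False
    using real_arch_pow[of 2 "2 * M"] by (auto simp: not_le[symmetric])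
qed

end
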